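(* Let $(\Gamma,c)$ be a real congruence group and let $\gamma\in\Gamma$ be admissible. Then $C_\gamma$ contains two cusps of $\Gamma$, and $C_\gamma$ is homeomorphic to a closed interval.
   Context: $\mathfrak{h}$ is the upper half-plane. A complex conjugation is an anti-holomorphic involution $c$ of $\mathfrak{h}$; it extends to $\mathfrak{h}\cup\mathbf{R}\mathbf{P}^1$. For $\gamma\in\mathrm{PSL}_2(\mathbf{R})$, $\gamma^c=c\gamma c$. A real congruence group is a pair $(\Gamma,c)$ with $\Gamma\subseteq\mathrm{PSL}_2(\mathbf{Z})$, $c$ a complex conjugation with $\Gamma^c=\Gamma$, and such that for some $N\ge1$, $\Gamma$ contains $\Gamma(N)$ (image of matrices $\equiv I\bmod N$) and $\Gamma(N)^c=\Gamma(N)$. The cusps of $\Gamma$ are the points of $\mathbf{Q}\mathbf{P}^1$, and $\mathfrak{h}^*=\mathfrak{h}\cup\mathbf{Q}\mathbf{P}^1$. An element $\gamma\in\Gamma$ is admissible if $\gamma^c=\gamma^{-1}$, and $C_\gamma=\{z\in\mathfrak{h}^*:\gamma z=cz\}$. *)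

theory Defs
  imports "HOL-Analysis.Analysis"
begin

text \<open>Points of the closure of the upper half-plane in the Riemann sphere,
  i.e. of h \<union> RP^1, are represented by complex options: None is the point
  at infinity and Some z a point with Im z \<ge> 0.\<close>

definition uhp :: "complex set" where
  "uhp = {z. Im z > 0}"

definition cusps :: "complex option set" where
  "cusps = insert None {Some (complex_of_real (real_of_rat q)) | q. True}"

definition hstar :: "complex option set" where
  "hstar = Some ` uhp \<union> cusps"

text \<open>Topology on h \<union> RP^1: transported from the closed unit disc by the
  Cayley transform (a homeomorphism of h \<union> RP^1 onto the closed disc).\<close>

definition cay :: "complex option \<Rightarrow> complex" where
  "cay x = (case x of None \<Rightarrow> 1 | Some z \<Rightarrow> (z - \<i>) / (z + \<i>))"

definition icay :: "complex \<Rightarrow> complex option" where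
  "icay w = (if w = 1 then None else Some (\<i> * (1 + w) / (1 - w)))"

text \<open>A matrix ((a,b),(c,d)) is written as the quadruple (a,b,c,d).
  Subgroups of PSL2(Z) are represented by their full preimages in SL2(Z).\<close>

type_synonym mat2 = "int \<times> int \<times> int \<times> int"

fun mdet :: "mat2 \<Rightarrow> int" where
  "mdet (a,b,c,d) = a*d - b*c"

fun mmul :: "mat2 \<Rightarrow> mat2 \<Rightarrow> mat2" where
  "mmul (a,b,c,d) (a',b',c',d') = (a*a'+b*c', a*b'+b*d', c*a'+d*c', c*b'+d*d')"

fun minv :: "mat2 \<Rightarrow> mat2" where
  "minv (a,b,c,d) = (d, -b, -c, a)"

fun mneg :: "mat2 \<Rightarrow> mat2" where
  "mneg (a,b,c,d) = (-a, -b, -c, -d)"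

definition mid :: mat2 where "mid = (1,0,0,1)"

definition SL2Z :: "mat2 set" where
  "SL2Z = {M. mdet M = 1}"

definition psl2z_subgroup :: "mat2 set \<Rightarrow> bool" where
  "psl2z_subgroup G \<longleftrightarrow> G \<subseteq> SL2Z \<and> mid \<in> G \<and>
     (\<forall>M\<in>G. mneg M \<in> G) \<and> (\<forall>M\<in>G. minv M \<in> G) \<and>
     (\<forall>M\<in>G. \<forall>M'\<in>G. mmul M M' \<in> G)"

fun mcong :: "int \<Rightarrow> mat2 \<Rightarrow> mat2 \<Rightarrow> bool" where
  "mcong N (a,b,c,d) (a',b',c',d') \<longleftrightarrow>
     N dvd (a - a') \<and> N dvd (b - b') \<and> N dvd (c - c') \<and> N dvd (d - d')"

text \<open>Preimage in SL2(Z) of the image of Gamma(N) in PSL2(Z).\<close>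
definition GammaN :: "nat \<Rightarrow> mat2 set" where
  "GammaN N = {M \<in> SL2Z. mcong (int N) M mid \<or> mcong (int N) M (mneg mid)}"

fun mob :: "mat2 \<Rightarrow> complex \<Rightarrow> complex" where
  "mob (a,b,c,d) z = (of_int a * z + of_int b) / (of_int c * z + of_int d)"

fun mobx :: "mat2 \<Rightarrow> complex option \<Rightarrow> complex option" where
  "mobx (a,b,c,d) None = (if c = 0 then None else Some (of_int a / of_int c))"
| "mobx (a,b,c,d) (Some z) =
     (if of_int c * z + of_int d = 0 then None
      else Some ((of_int a * z + of_int b) / (of_int c * z + of_int d)))"

text \<open>An anti-holomorphic involution of h (only its values on h matter).\<close>
definition complex_conjugation :: "(complex \<Rightarrow> complex) \<Rightarrow> bool" where
  "complex_conjugation c \<longleftrightarrow>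
     (\<forall>z\<in>uhp. c z \<in> uhp) \<and> (\<forall>z\<in>uhp. c (c z) = z) \<and>
     (\<lambda>z. cnj (c z)) holomorphic_on uhp"

text \<open>The (continuous) extension of c to h \<union> RP^1, obtained by taking limits
  from h (in the topology transported by the Cayley transform).\<close>
definition cext :: "(complex \<Rightarrow> complex) \<Rightarrow> complex option \<Rightarrow> complex option" where
  "cext c x = (case x of
      Some z \<Rightarrow> (if z \<in> uhp then Some (c z)
                 else icay (Lim (at (cay x) within ball 0 1)
                                (\<lambda>w. cay (Some (c (the (icay w)))))))
    | None \<Rightarrow> icay (Lim (at (cay x) within ball 0 1)
                         (\<lambda>w. cay (Some (c (the (icay w)))))))"

text \<open>Gamma^c = Gamma, as sets of transformations of h.\<close>
definition conj_stable :: "(complex \<Rightarrow> complex) \<Rightarrow> mat2 set \<Rightarrow> bool" where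
  "conj_stable c G \<longleftrightarrow>
     (\<forall>M\<in>G. \<exists>M'\<in>G. \<forall>z\<in>uhp. c (mob M (c z)) = mob M' z) \<and>
     (\<forall>M'\<in>G. \<exists>M\<in>G. \<forall>z\<in>uhp. c (mob M (c z)) = mob M' z)"

definition real_congruence_group :: "mat2 set \<Rightarrow> (complex \<Rightarrow> complex) \<Rightarrow> bool" where
  "real_congruence_group G c \<longleftrightarrow>
     psl2z_subgroup G \<and> complex_conjugation c \<and> conj_stable c G \<and>
     (\<exists>N::nat. N \<ge> 1 \<and> GammaN N \<subseteq> G \<and> conj_stable c (GammaN N))"

text \<open>gamma is admissible: gamma^c = gamma^{-1} (as transformations of h).\<close>
definition admissible :: "mat2 set \<Rightarrow> (complex \<Rightarrow> complex) \<Rightarrow> mat2 \<Rightarrow> bool" where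
  "admissible G c M \<longleftrightarrow> M \<in> G \<and> (\<forall>z\<in>uhp. c (mob M (c z)) = mob (minv M) z)"

definition Cgamma :: "(complex \<Rightarrow> complex) \<Rightarrow> mat2 \<Rightarrow> complex option set" where
  "Cgamma c M = {x \<in> hstar. mobx M x = cext c x}"

end

theory Submission
  imports Defs "HOL-Complex_Analysis.Complex_Analysis" "HOL-Computational_Algebra.Nth_Powers"
begin

text \<open>A complex conjugation \<open>c\<close> of \<open>h\<close> is, by the Cayley transform and Schwarz's lemma,
  an anti-Moebius map \<open>z \<mapsto> B (cnj z)\<close> with \<open>B\<close> real of determinant \<open>-1\<close>. Since \<open>c\<close> is an
  involution, \<open>B\<close> is traceless, \<open>B = (a, b; p, -a)\<close>, and since \<open>c\<close> normalises \<open>\<Gamma>(N)\<close>, the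
  entries \<open>a, b, p\<close> are integers. For admissible \<open>\<gamma>\<close> the map \<open>\<gamma>\<^sup>-\<^sup>1 \<circ> c\<close> is again an
  anti-holomorphic involution, so \<open>\<gamma>\<^sup>-\<^sup>1 B = (e, f; g, -e)\<close> is traceless and integral with
  \<open>e\<^sup>2 + f g = 1\<close>. The condition \<open>\<gamma> x = c x\<close> then reads \<open>g |z|\<^sup>2 - 2 e Re z - f = 0\<close>, also at
  the boundary where \<open>c\<close> acts by the same formula: a geodesic whose endpoints
  \<open>(e \<plusminus> 1)/g\<close>, resp. \<open>-f/(2e)\<close> and \<open>\<infinity>\<close>, are rational. So \<open>C\<^sub>\<gamma>\<close> is a geodesic arc joining two
  cusps, and its Cayley image is an arc in the closed disc.\<close>

section \<open>Real Moebius transformations\<close>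

type_synonym rmat = "real \<times> real \<times> real \<times> real"

fun rmob :: "rmat \<Rightarrow> complex \<Rightarrow> complex" where
  "rmob (a,b,c,d) z = (of_real a * z + of_real b) / (of_real c * z + of_real d)"

fun rmul :: "rmat \<Rightarrow> rmat \<Rightarrow> rmat" where
  "rmul (a,b,c,d) (a',b',c',d') = (a*a'+b*c', a*b'+b*d', c*a'+d*c', c*b'+d*d')"

fun rdet :: "rmat \<Rightarrow> real" where
  "rdet (a,b,c,d) = a*d - b*c"

fun real_mat :: "mat2 \<Rightarrow> rmat" where
  "real_mat (a,b,c,d) = (of_int a, of_int b, of_int c, of_int d)"

lemma mob_eq_rmob: "mob M z = rmob (real_mat M) z"
  by (cases M) simp

lemma rdet_real_mat: "rdet (real_mat M) = of_int (mdet M)"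
  by (cases M) simp

lemma real_mat_mmul: "real_mat (mmul M N) = rmul (real_mat M) (real_mat N)"
  by (cases M; cases N) simp

lemma rdet_rmul: "rdet (rmul M N) = rdet M * rdet N"
  by (cases M; cases N) (simp add: algebra_simps)

lemma mdet_mmul: "mdet (mmul M N) = mdet M * mdet N"
  by (cases M; cases N) (simp add: algebra_simps)

lemma mdet_minv: "mdet (minv M) = mdet M"
  by (cases M) simp

lemma rmob_denom_nonzero:
  assumes "Im z \<noteq> 0" "a*d - b*c \<noteq> (0::real)"
  shows "of_real c * z + of_real d \<noteq> 0"
proof
  assume h: "of_real c * z + of_real d = 0"
  then have "Im (of_real c * z + of_real d) = 0" by simp
  then have "c = 0" using assms(1) by simp
  with h assms(2) show False by simp
qed

lemma Im_rmob:
  "Im (rmob (a,b,c,d) z) = (a*d - b*c) * Im z / (cmod (of_real c * z + of_real d))^2"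
proof -
  have "Im (rmob (a,b,c,d) z) = (Im (of_real a * z + of_real b) * Re (of_real c * z + of_real d)
      - Re (of_real a * z + of_real b) * Im (of_real c * z + of_real d)) / (cmod (of_real c * z + of_real d))^2"
    by (simp add: Im_divide cmod_power2)
  also have "Im (of_real a * z + of_real b) * Re (of_real c * z + of_real d)
      - Re (of_real a * z + of_real b) * Im (of_real c * z + of_real d) = (a*d - b*c) * Im z"
    by (simp add: algebra_simps)
  finally show ?thesis .
qed

lemma Im_rmob_pos:
  assumes "Im z > 0" "rdet M > 0"
  shows "Im (rmob M z) > 0"
proof -
  obtain a b c d where M: "M = (a,b,c,d)" by (cases M)
  then have "of_real c * z + of_real d \<noteq> 0"
    using rmob_denom_nonzero[of z a d b c] assms by auto
  then show ?thesis using assms unfolding M Im_rmob by simp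
qed

lemma Im_rmob_cnj_pos:
  assumes "Im z > 0" "rdet B < 0"
  shows "Im (rmob B (cnj z)) > 0"
proof -
  obtain a b c d where B: "B = (a,b,c,d)" by (cases B)
  then have "of_real c * cnj z + of_real d \<noteq> 0"
    using rmob_denom_nonzero[of "cnj z" a d b c] assms by auto
  moreover have "(a*d - b*c) * Im (cnj z) > 0"
    using mult_neg_pos[of "a*d - b*c" "Im z"] assms B by simp
  ultimately show ?thesis unfolding B Im_rmob by (simp add: divide_neg_pos)
qed

lemma cnj_rmob: "cnj (rmob M z) = rmob M (cnj z)"
  by (cases M) simp

lemma rmob_rmul:
  assumes "Im z \<noteq> 0" "rdet M \<noteq> 0" "rdet N \<noteq> 0"
  shows "rmob M (rmob N z) = rmob (rmul M N) z"
proof -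
  obtain a b c d where M: "M = (a,b,c,d)" by (cases M)
  obtain a' b' c' d' where N: "N = (a',b',c',d')" by (cases N)
  have n1: "of_real c' * z + of_real d' \<noteq> 0" using rmob_denom_nonzero assms M N by auto
  have "Im (rmob N z) \<noteq> 0" using assms n1 unfolding N Im_rmob by auto
  then have n2: "of_real c * rmob N z + of_real d \<noteq> 0" using rmob_denom_nonzero assms M by auto
  have "rdet (rmul M N) \<noteq> 0" using assms by (simp add: rdet_rmul)
  then have n3: "of_real (c*a'+d*c') * z + of_real (c*b'+d*d') \<noteq> 0"
    using rmob_denom_nonzero[of z "a*a'+b*c'" "c*b'+d*d'" "a*b'+b*d'" "c*a'+d*c'"] assms M N by simp
  have "of_real c * rmob N z + of_real d = (of_real (c*a'+d*c') * z + of_real (c*b'+d*d')) / (of_real c' * z + of_real d')"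
    "of_real a * rmob N z + of_real b = (of_real (a*a'+b*c') * z + of_real (a*b'+b*d')) / (of_real c' * z + of_real d')"
    using n1 by (simp_all add: N field_simps)
  then show ?thesis using n1 n3 by (simp add: M N)
qed

lemma rmob_scale:
  assumes "k \<noteq> 0"
  shows "rmob (k*a,k*b,k*c,k*d) z = rmob (a,b,c,d) z"
proof -
  have "rmob (k*a,k*b,k*c,k*d) z = (of_real k * (of_real a * z + of_real b)) / (of_real k * (of_real c * z + of_real d))"
    by (simp add: algebra_simps)
  then show ?thesis using assms by simp
qed

lemma rmob_eq_on_uhp_imp_proportional:
  assumes "\<forall>z\<in>uhp. rmob (m1,m2,m3,m4) z = rmob (n1,n2,n3,n4) z"
    "m1*m4 - m2*m3 \<noteq> 0" "n1*n4 - n2*n3 \<noteq> 0"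
  shows "\<exists>k. n1 = k*m1 \<and> n2 = k*m2 \<and> n3 = k*m3 \<and> n4 = k*m4"
proof -
  have eq: "(of_real m1 * z + of_real m2) * (of_real n3 * z + of_real n4) =
            (of_real n1 * z + of_real n2) * (of_real m3 * z + of_real m4)" if "Im z > 0" for z
  proof -
    have "of_real m3 * z + of_real m4 \<noteq> 0" "of_real n3 * z + of_real n4 \<noteq> 0"
      using rmob_denom_nonzero assms that by auto
    then show ?thesis using assms(1) that by (auto simp: field_simps uhp_def)
  qed
  \<comment> \<open>Comparing the quadratic polynomial identity at \<open>i\<close> and \<open>2i\<close>.\<close>
  from eq[of \<i>] have A: "m2*n4 - n2*m4 = m1*n3 - n1*m3" "m1*n4 + m2*n3 = n1*m4 + n2*m3"
    by (auto simp: complex_eq_iff algebra_simps)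
  from eq[of "2*\<i>"] have B: "m2*n4 - n2*m4 = 4*(m1*n3 - n1*m3)"
    by (auto simp: complex_eq_iff algebra_simps)
  have C: "m1*n3 = n1*m3" "m2*n4 = n2*m4" using A(1) B by auto
  define D where "D = m1*m4 - m2*m3"
  define l where "l = m4*n1 - m2*n3"
  have "D * n1 = l * m1" "D * n2 = l * m2" "D * n3 = l * m3" "D * n4 = l * m4"
    unfolding D_def l_def using A(2) C by algebra+
  then show ?thesis using assms(2) unfolding D_def[symmetric]
    by (intro exI[of _ "l/D"]) (auto simp: field_simps)
qed

lemma rmob_identity_on_uhp_imp_scalar:
  assumes "\<forall>z\<in>uhp. rmob (a,b,c,d) z = z" "a*d - b*c \<noteq> 0"
  shows "c = 0 \<and> b = 0 \<and> a = d"
proof -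
  obtain k where "1 = k*a" "0 = k*b" "0 = k*c" "1 = k*d"
    using rmob_eq_on_uhp_imp_proportional[of a b c d 1 0 0 1] assms by auto
  then show ?thesis by (metis mult_cancel_left mult_eq_0_iff zero_neq_one)
qed

section \<open>Complex conjugations are anti-Moebius maps\<close>

definition cayley :: "complex \<Rightarrow> complex" where
  "cayley z = (z - \<i>) / (z + \<i>)"

definition cayley_inv :: "complex \<Rightarrow> complex" where
  "cayley_inv w = \<i> * (1 + w) / (1 - w)"

lemma cay_Some: "cay (Some z) = cayley z"
  by (simp add: cay_def cayley_def)

lemma add_i_nonzero: "Im z \<ge> 0 \<Longrightarrow> z + \<i> \<noteq> 0"
  by (auto simp: complex_eq_iff)

lemma cayley_in_ball:
  assumes "z \<in> uhp"
  shows "cayley z \<in> ball 0 1"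
proof -
  have "(cmod (z - \<i>))^2 = (Re z)^2 + (Im z - 1)^2" "(cmod (z + \<i>))^2 = (Re z)^2 + (Im z + 1)^2"
    by (simp_all add: cmod_power2)
  then have "(cmod (z - \<i>))^2 < (cmod (z + \<i>))^2"
    using assms by (simp add: uhp_def power2_eq_square algebra_simps)
  then have "cmod (z - \<i>) < cmod (z + \<i>)"
    by (meson norm_ge_zero power_less_imp_less_base)
  then show ?thesis by (simp add: cayley_def norm_divide divide_less_eq)
qed

lemma cayley_inv_in_uhp:
  assumes "w \<in> ball 0 1"
  shows "cayley_inv w \<in> uhp"
proof -
  have "w \<noteq> 1" using assms by auto
  then have "(Re (1 - w))^2 + (Im (1 - w))^2 > 0"
    by (metis complex_eq_iff right_minus_eq sum_power2_gt_zero_iff zero_complex.sel)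
  moreover have "(cmod w)^2 < 1" using assms by (simp add: abs_square_less_1)
  then have "(Re w)^2 + (Im w)^2 < 1" by (simp add: cmod_power2)
  moreover have "Im (cayley_inv w) = (1 - (Re w)^2 - (Im w)^2) / ((Re (1 - w))^2 + (Im (1 - w))^2)"
    by (simp add: cayley_inv_def Im_divide power2_eq_square algebra_simps)
  ultimately show ?thesis by (simp add: uhp_def)
qed

lemma cayley_cayley_inv: "w \<noteq> 1 \<Longrightarrow> cayley (cayley_inv w) = w"
  by (simp add: cayley_def cayley_inv_def field_simps)

lemma cayley_inv_cayley:
  assumes "z + \<i> \<noteq> 0"
  shows "cayley_inv (cayley z) = z"
proof -
  have "1 + cayley z = 2*z/(z+\<i>)" "1 - cayley z = 2*\<i>/(z+\<i>)"
    using assms by (simp_all add: cayley_def field_simps)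
  then show ?thesis using assms by (simp add: cayley_inv_def)
qed

lemma cayley_inj:
  assumes "z1 + \<i> \<noteq> 0" "z2 + \<i> \<noteq> 0" "cayley z1 = cayley z2"
  shows "z1 = z2"
  using assms cayley_inv_cayley by metis

lemma cnj_cayley: "cnj (cayley z) = (cnj z + \<i>) / (cnj z - \<i>)"
  by (simp add: cayley_def)

lemma disc_automorphism_form:
  assumes holF: "F holomorphic_on ball 0 1" and holG: "G holomorphic_on ball 0 1"
    and F: "\<And>w. w \<in> ball 0 1 \<Longrightarrow> F w \<in> ball 0 1"
    and G: "\<And>w. w \<in> ball 0 1 \<Longrightarrow> G w \<in> ball 0 1"
    and GF: "\<And>w. w \<in> ball 0 1 \<Longrightarrow> G (F w) = w"
  shows "\<exists>\<alpha> a0. cmod \<alpha> = 1 \<and> cmod a0 < 1 \<and>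
           (\<forall>z\<in>ball 0 1. F z = (\<alpha> * z + a0) / (1 + cnj a0 * \<alpha> * z))"
proof -
  define a0 where "a0 = F 0"
  have a0: "cmod a0 < 1" using F[of 0] by (simp add: a0_def)
  define H where "H = Moebius_function 0 a0 \<circ> F"
  define Hi where "Hi = G \<circ> Moebius_function 0 (-a0)"
  have holH: "H holomorphic_on ball 0 1" unfolding H_def
    by (rule holomorphic_on_compose_gen[OF holF Moebius_function_holomorphic]) (use a0 F in auto)
  have holHi: "Hi holomorphic_on ball 0 1" unfolding Hi_def
    by (rule holomorphic_on_compose_gen[OF Moebius_function_holomorphic holG])
       (use a0 Moebius_function_norm_lt_1 in auto)
  have H0: "H 0 = 0" by (simp add: H_def a0_def Moebius_function_eq_zero)
  have Hi0: "Hi 0 = 0" using GF[of 0] by (simp add: Hi_def a0_def Moebius_function_of_zero)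
  have Hb: "cmod (H z) < 1" if "cmod z < 1" for z
    using that F[of z] Moebius_function_norm_lt_1[OF a0] by (simp add: H_def)
  have Hib: "cmod (Hi z) < 1" if "cmod z < 1" for z
    using that G Moebius_function_norm_lt_1[of "-a0" z] a0 by (simp add: Hi_def)
  have F_eq: "F z = Moebius_function 0 (-a0) (H z)" if "cmod z < 1" for z
    using Moebius_function_compose[of "-a0" a0 "F z"] a0 F[of z] that by (simp add: H_def)
  have HiH: "Hi (H z) = z" if "cmod z < 1" for z
    using F_eq[OF that] GF[of z] that by (simp add: Hi_def)
  \<comment> \<open>Schwarz's lemma applied to \<open>H\<close> and to its inverse \<open>Hi\<close> shows that \<open>H\<close> is a rotation.\<close>
  have half: "cmod (1/2 :: complex) < 1" by simp
  have "cmod (H (1/2)) \<le> cmod (1/2 :: complex)"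
    by (rule Schwarz_Lemma(1)[OF holH H0 Hb half])
  moreover have "cmod (Hi (H (1/2))) \<le> cmod (H (1/2))"
    by (rule Schwarz_Lemma(1)[OF holHi Hi0 Hib Hb[OF half]])
  ultimately have "cmod (H (1/2)) = cmod (1/2 :: complex)"
    unfolding HiH[OF half] by (rule antisym)
  then have "\<exists>\<alpha>. (\<forall>z. cmod z < 1 \<longrightarrow> H z = \<alpha> * z) \<and> cmod \<alpha> = 1"
    using half by (intro Schwarz_Lemma(3)[OF holH H0 Hb half] disjI1 exI[of _ "1/2"] conjI) auto
  then obtain \<alpha> where \<alpha>: "\<And>z. cmod z < 1 \<Longrightarrow> H z = \<alpha> * z" "cmod \<alpha> = 1" by blast
  have "F z = (\<alpha> * z + a0) / (1 + cnj a0 * \<alpha> * z)" if "cmod z < 1" for z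
    using F_eq[OF that] \<alpha>(1)[OF that] by (simp add: Moebius_function_def)
  then have "\<forall>z\<in>ball 0 1. F z = (\<alpha> * z + a0) / (1 + cnj a0 * \<alpha> * z)" by simp
  with \<alpha>(2) a0 show ?thesis by blast
qed

lemma complex_conjugation_disc_form:
  assumes "complex_conjugation c"
  shows "\<exists>\<alpha> a0. cmod \<alpha> = 1 \<and> cmod a0 < 1 \<and>
     (\<forall>u\<in>uhp. c u = cayley_inv (cnj ((\<alpha> * cayley u + a0) / (1 + cnj a0 * \<alpha> * cayley u))))"
proof -
  have cu: "\<And>z. z \<in> uhp \<Longrightarrow> c z \<in> uhp" and cc: "\<And>z. z \<in> uhp \<Longrightarrow> c (c z) = z"
    and hol: "(\<lambda>z. cnj (c z)) holomorphic_on uhp"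
    using assms unfolding complex_conjugation_def by auto
  have cayley_inv_ball: "cayley_inv w \<in> uhp" "cayley (cayley_inv w) = w" if "w \<in> ball 0 1" for w
  proof -
    have "w \<noteq> 1" using that by auto
    then show "cayley_inv w \<in> uhp" "cayley (cayley_inv w) = w"
      using cayley_inv_in_uhp[OF that] cayley_cayley_inv by auto
  qed
  have cayley_uhp: "cayley u \<in> ball 0 1" "cayley_inv (cayley u) = u" if "u \<in> uhp" for u
    using cayley_in_ball[OF that] cayley_inv_cayley add_i_nonzero that by (auto simp: uhp_def)
  \<comment> \<open>\<open>F\<close> is the disc picture of the holomorphic map \<open>cnj \<circ> c\<close>; since \<open>c\<close> is an involution,
     \<open>cnj \<circ> F \<circ> cnj\<close> inverts it, so \<open>F\<close> is an automorphism of the disc.\<close>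
  define F where "F w = cnj (cayley (c (cayley_inv w)))" for w
  define G where "G w = cnj (F (cnj w))" for w
  have F: "F w \<in> ball 0 1" if "w \<in> ball 0 1" for w
    using cayley_in_ball[OF cu] cayley_inv_ball that by (simp add: F_def)
  have hol1: "(\<lambda>w. cnj (c (cayley_inv w))) holomorphic_on ball 0 1"
    by (rule holomorphic_on_compose_gen[OF _ hol, unfolded o_def])
       (use cayley_inv_ball in \<open>auto simp: cayley_inv_def intro!: holomorphic_intros\<close>)
  have holF: "F holomorphic_on ball 0 1"
  proof (rule holomorphic_transform)
    show "(\<lambda>w. (cnj (c (cayley_inv w)) + \<i>) / (cnj (c (cayley_inv w)) - \<i>)) holomorphic_on ball 0 1"
      using cu cayley_inv_ball by (intro holomorphic_intros hol1) (force simp: uhp_def complex_eq_iff)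
  qed (simp add: F_def cnj_cayley)
  have holG: "G holomorphic_on ball 0 1"
    unfolding holomorphic_on_def
  proof
    fix w :: complex assume "w \<in> ball 0 1"
    then have "(cnj \<circ> F \<circ> cnj) field_differentiable (at w)"
      using holomorphic_on_imp_differentiable_at[OF holF]
      by (intro field_differentiable_cnj_cnj) auto
    then show "G field_differentiable (at w within ball 0 1)"
      unfolding G_def[abs_def] o_def by (rule field_differentiable_at_within)
  qed
  have GF: "G (F w) = w" if "w \<in> ball 0 1" for w
  proof -
    have "cnj (F w) = cayley (c (cayley_inv w))" by (simp add: F_def)
    then have "G (F w) = cayley (c (c (cayley_inv w)))"
      using cayley_uhp cu cayley_inv_ball that by (simp add: G_def F_def)
    then show ?thesis using cc cayley_inv_ball that by simp
  qed
  have c_F: "c u = cayley_inv (cnj (F (cayley u)))" if "u \<in> uhp" for u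
    using cayley_uhp[OF that] cayley_uhp[OF cu[OF that]] by (simp add: F_def)
  obtain \<alpha> a0 where "cmod \<alpha> = 1" "cmod a0 < 1"
    and "\<forall>z\<in>ball 0 1. F z = (\<alpha> * z + a0) / (1 + cnj a0 * \<alpha> * z)"
    using disc_automorphism_form[OF holF holG F _ GF] F by (auto simp: G_def)
  with c_F cayley_uhp show ?thesis by (intro exI[of _ \<alpha>] exI[of _ a0]) auto
qed

text \<open>Scaling by \<open>\<mu>\<close> with \<open>\<mu>\<^sup>2 = \<alpha>\<close> is what makes the four coefficients below real.\<close>
lemma cayley_inv_moebius_identity:
  fixes \<mu> a0 v w :: complex
  defines "s \<equiv> (cnj \<mu>^2 * w + cnj a0) / (1 + a0 * cnj \<mu>^2 * w)"
  assumes \<mu>: "\<mu> * cnj \<mu> = 1" and v: "v \<noteq> \<i>" and w: "(v - \<i>) * w = v + \<i>"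
    and Q: "1 + a0 * cnj \<mu>^2 * w \<noteq> 0" and s: "s \<noteq> 1"
  shows "cayley_inv s =
    ((\<mu> + cnj \<mu> + a0 * cnj \<mu> + cnj a0 * \<mu>) * v + \<i> * (cnj \<mu> - \<mu> + a0 * cnj \<mu> - cnj a0 * \<mu>)) /
    (-\<i> * (\<mu> - cnj \<mu> + a0 * cnj \<mu> - cnj a0 * \<mu>) * v + (a0 * cnj \<mu> + cnj a0 * \<mu> - \<mu> - cnj \<mu>))"
proof -
  define P where "P = v - \<i>"
  have P: "P \<noteq> 0" "P * w = v + \<i>" using v w by (simp_all add: P_def)
  define Q where "Q = 1 + a0 * cnj \<mu>^2 * w"
  have sQ: "Q * s = cnj \<mu>^2 * w + cnj a0" using Q by (simp add: s_def Q_def)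
  have e1: "P * Q * (1 + s) = P + a0 * cnj \<mu>^2 * (P * w) + cnj \<mu>^2 * (P * w) + cnj a0 * P"
  proof -
    have "P * Q * (1 + s) = P * Q + P * (Q * s)" by (simp add: algebra_simps)
    then show ?thesis unfolding sQ by (simp add: Q_def algebra_simps)
  qed
  have e2: "P * Q * (1 - s) = P + a0 * cnj \<mu>^2 * (P * w) - cnj \<mu>^2 * (P * w) - cnj a0 * P"
  proof -
    have "P * Q * (1 - s) = P * Q - P * (Q * s)" by (simp add: algebra_simps)
    then show ?thesis unfolding sQ by (simp add: Q_def algebra_simps)
  qed
  have num: "\<mu> * (P * Q * (1 + s)) =
      (\<mu> + cnj \<mu> + a0 * cnj \<mu> + cnj a0 * \<mu>) * v + \<i> * (cnj \<mu> - \<mu> + a0 * cnj \<mu> - cnj a0 * \<mu>)"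
    unfolding e1 P(2) unfolding P_def using \<mu> i_squared by algebra
  have den: "-\<i> * \<mu> * (P * Q * (1 - s)) =
      -\<i> * (\<mu> - cnj \<mu> + a0 * cnj \<mu> - cnj a0 * \<mu>) * v + (a0 * cnj \<mu> + cnj a0 * \<mu> - \<mu> - cnj \<mu>)"
    unfolding e2 P(2) unfolding P_def using \<mu> i_squared by algebra
  have "\<mu> \<noteq> 0" using \<mu> by auto
  then have "cayley_inv s = (\<mu> * (P * Q * (1 + s))) / (-\<i> * \<mu> * (P * Q * (1 - s)))"
    using P(1) Q s unfolding Q_def[symmetric] by (simp add: cayley_inv_def field_simps)
  then show ?thesis unfolding num den .
qed

lemma cayley_disc_automorphism_anti_moebius:
  assumes \<alpha>: "cmod \<alpha> = 1" and a0: "cmod a0 < 1"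
  shows "\<exists>B. \<forall>u\<in>uhp.
    cayley_inv (cnj ((\<alpha> * cayley u + a0) / (1 + cnj a0 * \<alpha> * cayley u))) = rmob B (cnj u)"
proof -
  define \<mu> where "\<mu> = csqrt \<alpha>"
  have "(cmod \<mu>)^2 = 1" using \<alpha> by (simp add: \<mu>_def flip: norm_power)
  then have \<mu>: "\<mu> * cnj \<mu> = 1" by (metis complex_norm_square of_real_1)
  have cnj_\<alpha>: "cnj \<alpha> = cnj \<mu>^2" by (simp add: \<mu>_def flip: complex_cnj_power)
  define X1 where "X1 = \<mu> + cnj \<mu> + a0 * cnj \<mu> + cnj a0 * \<mu>"
  define X2 where "X2 = \<i> * (cnj \<mu> - \<mu> + a0 * cnj \<mu> - cnj a0 * \<mu>)"
  define X3 where "X3 = -\<i> * (\<mu> - cnj \<mu> + a0 * cnj \<mu> - cnj a0 * \<mu>)"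
  define X4 where "X4 = a0 * cnj \<mu> + cnj a0 * \<mu> - \<mu> - cnj \<mu>"
  have real: "X1 \<in> \<real>" "X2 \<in> \<real>" "X3 \<in> \<real>" "X4 \<in> \<real>"
    unfolding Reals_cnj_iff X1_def X2_def X3_def X4_def by (simp_all add: algebra_simps)
  have "cayley_inv (cnj ((\<alpha> * cayley u + a0) / (1 + cnj a0 * \<alpha> * cayley u))) =
      rmob (Re X1, Re X2, Re X3, Re X4) (cnj u)" if u: "u \<in> uhp" for u
  proof -
    have K: "cmod (\<alpha> * cayley u) < 1" using cayley_in_ball[OF u] \<alpha> by (simp add: norm_mult)
    have "cmod (cnj a0 * \<alpha> * cayley u) < 1"
      using mult_strict_mono[of "cmod a0" 1 "cmod (\<alpha> * cayley u)" 1] K a0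
      by (simp add: norm_mult mult.assoc)
    then have "1 + cnj a0 * \<alpha> * cayley u \<noteq> 0"
      by (metis add_eq_0_iff norm_minus_cancel norm_one order_less_irrefl)
    moreover have "1 + a0 * cnj \<mu>^2 * cnj (cayley u) = cnj (1 + cnj a0 * \<alpha> * cayley u)"
      unfolding cnj_\<alpha>[symmetric] by simp
    ultimately have Q: "1 + a0 * cnj \<mu>^2 * cnj (cayley u) \<noteq> 0"
      by (metis complex_cnj_zero_iff)
    have T: "cmod ((\<alpha> * cayley u + a0) / (1 + cnj a0 * \<alpha> * cayley u)) < 1"
      using Moebius_function_norm_lt_1[of "-a0" "\<alpha> * cayley u" 0] a0 K
      by (simp add: Moebius_function_simple mult.assoc)
    have s_eq: "cnj ((\<alpha> * cayley u + a0) / (1 + cnj a0 * \<alpha> * cayley u)) =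
        (cnj \<mu>^2 * cnj (cayley u) + cnj a0) / (1 + a0 * cnj \<mu>^2 * cnj (cayley u))"
      by (simp add: cnj_\<alpha> mult.commute mult.left_commute)
    with T have s: "(cnj \<mu>^2 * cnj (cayley u) + cnj a0) / (1 + a0 * cnj \<mu>^2 * cnj (cayley u)) \<noteq> 1"
      by (metis complex_mod_cnj norm_one order_less_irrefl)
    have v: "cnj u \<noteq> \<i>" and w: "(cnj u - \<i>) * cnj (cayley u) = cnj u + \<i>"
      using u by (auto simp: uhp_def cnj_cayley complex_eq_iff)
    have "cayley_inv (cnj ((\<alpha> * cayley u + a0) / (1 + cnj a0 * \<alpha> * cayley u))) =
        (X1 * cnj u + X2) / (X3 * cnj u + X4)"
      unfolding s_eq X1_def X2_def X3_def X4_def by (rule cayley_inv_moebius_identity[OF \<mu> v w Q s])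
    also have "\<dots> = rmob (Re X1, Re X2, Re X3, Re X4) (cnj u)"
      using real by simp
    finally show ?thesis .
  qed
  then show ?thesis by blast
qed

lemma complex_conjugation_anti_moebius:
  assumes "complex_conjugation c"
  shows "\<exists>B. rdet B = -1 \<and> (\<forall>u\<in>uhp. c u = rmob B (cnj u))"
proof -
  obtain \<alpha> a0 where "cmod \<alpha> = 1" "cmod a0 < 1"
    and c: "\<forall>u\<in>uhp. c u = cayley_inv (cnj ((\<alpha> * cayley u + a0) / (1 + cnj a0 * \<alpha> * cayley u)))"
    using complex_conjugation_disc_form[OF assms] by blast
  then obtain a b p d where B: "\<forall>u\<in>uhp. c u = rmob (a,b,p,d) (cnj u)"
    using cayley_disc_automorphism_anti_moebius by (metis prod_cases4)
  have "\<i> \<in> uhp" by (simp add: uhp_def)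
  then have "c \<i> \<in> uhp" using assms by (simp add: complex_conjugation_def)
  then have "Im (rmob (a,b,p,d) (cnj \<i>)) > 0" using B \<open>\<i> \<in> uhp\<close> by (simp add: uhp_def)
  \<comment> \<open>\<open>c\<close> preserves \<open>uhp\<close>, so the determinant is negative; rescale it to \<open>-1\<close>.\<close>
  then have neg: "a*d - b*p < 0" unfolding Im_rmob
    by (simp add: zero_less_divide_iff)
  define k where "k = 1 / sqrt (-(a*d - b*p))"
  have "k \<noteq> 0" using neg by (simp add: k_def)
  moreover have "k^2 = 1 / (-(a*d - b*p))" using neg by (simp add: k_def power_divide)
  then have "rdet (k*a, k*b, k*p, k*d) = -1" using neg by (simp add: power2_eq_square field_simps)
  ultimately show ?thesis using B rmob_scale by (intro exI[of _ "(k*a, k*b, k*p, k*d)"]) auto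
qed

lemma square_scalar_imp_traceless:
  fixes a b c d :: real
  assumes "b*(a+d) = 0" "c*(a+d) = 0" "a*a = d*d" "a*d - b*c < 0"
  shows "d = -a"
proof (rule ccontr)
  assume "d \<noteq> -a"
  then have "a + d \<noteq> 0" "b = 0" "c = 0" using assms(1,2) by auto
  moreover have "(a-d)*(a+d) = 0" using assms(3) by (simp add: algebra_simps)
  ultimately show False using assms(4) by (simp add: mult_less_0_iff)
qed

lemma anti_moebius_involution_traceless:
  assumes det: "rdet A < 0" and inv: "\<forall>z\<in>uhp. rmob A (cnj (rmob A (cnj z))) = z"
  shows "\<exists>e f g. A = (e, f, g, -e)"
proof -
  obtain a b c d where A: "A = (a,b,c,d)" by (cases A)
  have AA: "rmul A A = (a*a+b*c, a*b+b*d, c*a+d*c, c*b+d*d)" by (simp add: A)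
  have "\<forall>z\<in>uhp. rmob (rmul A A) z = z"
  proof
    fix z assume "z \<in> uhp"
    then have "rmob (rmul A A) z = rmob A (rmob A z)"
      using rmob_rmul[of z A A] det by (simp add: uhp_def)
    then show "rmob (rmul A A) z = z" using inv \<open>z \<in> uhp\<close> by (simp add: cnj_rmob)
  qed
  moreover have "rdet (rmul A A) \<noteq> 0" using det by (simp add: rdet_rmul)
  ultimately have h: "c*a+d*c = 0" "a*b+b*d = 0" "a*a+b*c = c*b+d*d"
    using rmob_identity_on_uhp_imp_scalar unfolding AA rdet.simps by blast+
  have "d = -a"
  proof (rule square_scalar_imp_traceless)
    show "b * (a + d) = 0" "c * (a + d) = 0" using h(1,2) by (simp_all add: algebra_simps)
    show "a * a = d * d" using h(3) by (simp add: mult.commute)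
    show "a * d - b * c < 0" using det A by simp
  qed
  then show ?thesis using A by blast
qed

lemma anti_moebius_conj_rmob:
  assumes c: "\<forall>u\<in>uhp. c u = rmob B (cnj u)" and B: "rdet B < 0" and M: "rdet M > 0"
    and z: "z \<in> uhp"
  shows "c (rmob M (c z)) = rmob (rmul B (rmul M B)) z"
proof -
  have "c z \<in> uhp" using c z Im_rmob_cnj_pos[OF _ B] by (simp add: uhp_def)
  then have "rmob M (c z) \<in> uhp" using Im_rmob_pos M by (simp add: uhp_def)
  then have "c (rmob M (c z)) = rmob B (rmob M (rmob B z))" using c z by (simp add: cnj_rmob)
  also have "\<dots> = rmob (rmul B (rmul M B)) z"
    using rmob_rmul[of z M B] rmob_rmul[of z B "rmul M B"] z M B by (simp add: uhp_def rdet_rmul)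
  finally show ?thesis .
qed

section \<open>Integrality of the conjugation\<close>

lemma Ints_mult_if_double_Ints:
  fixes x y :: real
  assumes "2*x*y \<in> \<int>" "x^2 \<in> \<int>" "y^2 \<in> \<int>"
  shows "x*y \<in> \<int>"
proof -
  obtain T X Y where T: "2*x*y = of_int T" and X: "x^2 = of_int X" and Y: "y^2 = of_int Y"
    using assms by (meson Ints_cases)
  have "(2*x*y)^2 = 4*(x^2*y^2)" by (simp add: power_mult_distrib)
  then have "T^2 = 4*(X*Y)" using T X Y by (metis of_int_eq_iff of_int_mult of_int_numeral of_int_power)
  then have "even (T^2)" by simp
  then obtain T' where "T = 2*T'" by auto
  then have "x*y = of_int T'" using T by simp
  then show ?thesis by simp
qed

lemma Ints_if_mult_Ints:
  fixes x y :: real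
  assumes "x \<in> \<int>" "x \<noteq> 0" "x*y \<in> \<int>" "y^2 \<in> \<int>"
  shows "y \<in> \<int>"
proof -
  obtain X T Y where X: "x = of_int X" and T: "x*y = of_int T" and Y: "y^2 = of_int Y"
    using assms by (meson Ints_cases)
  have "(x*y)^2 = x^2 * y^2" by (simp add: power_mult_distrib)
  then have "T^2 = X^2 * Y" using X T Y by (metis of_int_eq_iff of_int_mult of_int_power)
  then have "X^2 dvd T^2" by simp
  then have "X dvd T" by simp
  then obtain Q where "T = X * Q" by blast
  then have "y = of_int Q" using X T assms(2) by simp
  then show ?thesis by simp
qed

text \<open>If \<open>a\<^sup>2 = M\<close> and \<open>b\<^sup>2 = N\<close>, then \<open>M N = (ab)\<^sup>2\<close> is a square, and \<open>M\<close> is prime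
  to \<open>N\<close> because \<open>N\<close> divides \<open>(bp)\<^sup>2 = (1 - M)\<^sup>2\<close>; so \<open>M\<close> itself is a square.\<close>
lemma Ints_if_square_coprime:
  fixes a b p :: real
  assumes a2: "a^2 \<in> \<int>" and b2: "b^2 \<in> \<int>" and p2: "p^2 \<in> \<int>" and ab: "a*b \<in> \<int>"
    and rel: "a^2 + b*p = 1"
  shows "a \<in> \<int>"
proof (cases "a = 0 \<or> b = 0")
  case True
  then have "a = 0 \<or> a^2 = 1" using rel by auto
  then show ?thesis by (auto simp: power2_eq_1_iff)
next
  case False
  obtain M N K S where M: "a^2 = of_int M" and N: "b^2 = of_int N" and K: "p^2 = of_int K"
    and S: "a*b = of_int S"
    using assms by (meson Ints_cases)
  have pos: "M > 0" "N > 0" using M N False by (metis of_int_0_less_iff zero_less_power2)+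
  have "(a*b)^2 = a^2*b^2" "(b*p)^2 = b^2*p^2" by (simp_all add: power_mult_distrib)
  moreover have "b*p = 1 - a^2" using rel by simp
  ultimately have "S^2 = M*N" "(1-M)^2 = N*K" using M N K S
    by (metis of_int_eq_iff of_int_mult of_int_power, metis of_int_eq_iff of_int_mult of_int_power of_int_diff of_int_1)
  moreover have "coprime M (1 - M)"
    by (metis coprime_commute coprime_diff_one_left coprime_minus_right_iff minus_diff_eq)
  ultimately have "coprime M N" by (metis coprime_mult_right_iff coprime_power_right_iff)
  then have "coprime (nat M) (nat N)" using pos by (metis coprime_int_iff int_nat_eq order_less_imp_le)
  moreover have "nat M * nat N = (nat \<bar>S\<bar>)^2" using \<open>S^2 = M*N\<close> pos
    by (metis abs_mult_self_eq nat_mult_distrib nat_power_eq order_less_imp_le power2_eq_square abs_ge_zero)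
  ultimately have "is_nth_power 2 (nat M)"
    using is_nth_power_mult_coprime_natD(1) pos by auto
  then obtain r where "nat M = r^2" by (auto elim: is_nth_powerE)
  then have "a^2 = (real r)^2" using M pos by (metis of_int_of_nat_eq of_nat_power int_nat_eq order_less_imp_le)
  then show ?thesis by (metis Ints_minus Ints_of_nat power2_eq_iff)
qed

lemma Ints_of_squares_Ints:
  fixes a b p :: real
  assumes a2: "a^2 \<in> \<int>" and b2: "b^2 \<in> \<int>" and p2: "p^2 \<in> \<int>"
    and ab2: "(a+b)^2 \<in> \<int>" and ap2: "(a-p)^2 \<in> \<int>" and rel: "a^2 + b*p = 1"
  shows "a \<in> \<int>" "b \<in> \<int>" "p \<in> \<int>"
proof -
  have "2*a*b = (a+b)^2 - a^2 - b^2" by (simp add: power2_eq_square algebra_simps)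
  then have "2*a*b \<in> \<int>" using a2 b2 ab2 by simp
  then have ab: "a*b \<in> \<int>" using Ints_mult_if_double_Ints a2 b2 by blast
  have "2*a*p = a^2 + p^2 - (a-p)^2" by (simp add: power2_eq_square algebra_simps)
  then have "2*a*p \<in> \<int>" using a2 p2 ap2 by simp
  then have ap: "a*p \<in> \<int>" using Ints_mult_if_double_Ints a2 p2 by blast
  show a: "a \<in> \<int>" using Ints_if_square_coprime[OF a2 b2 p2 ab rel] .
  have "b \<in> \<int> \<and> p \<in> \<int>"
  proof (cases "a = 0")
    case True
    then have bp: "b*p = 1" using rel by simp
    obtain B P where B: "b^2 = of_int B" and P: "p^2 = of_int P" using b2 p2 by (meson Ints_cases)
    have "(b*p)^2 = b^2*p^2" by (simp add: power_mult_distrib)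
    then have "B*P = 1" using bp B P by (metis of_int_eq_1_iff of_int_mult power_one)
    moreover have "B \<ge> 0" using B by (metis of_int_0_le_iff zero_le_power2)
    ultimately have "B = 1" using zmult_eq_1_iff[of B P] by linarith
    then have "b = 1 \<or> b = -1" using B by (simp add: power2_eq_1_iff)
    moreover from this have "p = b" using bp by auto
    ultimately show ?thesis by auto
  next
    case False
    show ?thesis using Ints_if_mult_Ints[OF a False] ab ap b2 p2 by blast
  qed
  then show "b \<in> \<int>" "p \<in> \<int>" by auto
qed

lemma conj_stable_GammaN_off_diagonal:
  assumes c: "\<forall>u\<in>uhp. c u = rmob B (cnj u)" and B: "rdet B = -1"
    and stable: "conj_stable c (GammaN N)" and M: "M \<in> GammaN N"
    and BMB: "rmul B (rmul (real_mat M) B) = (x1, x2, x3, x4)"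
  shows "x2 / real N \<in> \<int> \<and> x3 / real N \<in> \<int>"
proof -
  obtain M' where M': "M' \<in> GammaN N" and eq: "\<forall>z\<in>uhp. c (mob M (c z)) = mob M' z"
    using stable M unfolding conj_stable_def by blast
  have dM: "rdet (real_mat M) = 1" and dM': "rdet (real_mat M') = 1"
    using M M' by (simp_all add: GammaN_def SL2Z_def rdet_real_mat)
  have "rdet (x1, x2, x3, x4) = 1" unfolding BMB[symmetric] rdet_rmul using dM B by simp
  then have dx: "x1*x4 - x2*x3 = 1" by simp
  obtain m1 m2 m3 m4 where m: "M' = (m1,m2,m3,m4)" by (cases M')
  have same: "\<forall>z\<in>uhp. rmob (x1,x2,x3,x4) z = rmob (of_int m1, of_int m2, of_int m3, of_int m4) z"
    using anti_moebius_conj_rmob[OF c] B dM eq BMB by (simp add: mob_eq_rmob m)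
  have "of_int m1 * of_int m4 - of_int m2 * of_int m3 \<noteq> (0::real)" using dM' by (simp add: m)
  then obtain k where k: "m1 = k*x1" "m2 = k*x2" "m3 = k*x3" "m4 = k*x4"
    using rmob_eq_on_uhp_imp_proportional[OF same] dx by auto
  have "of_int m1 * of_int m4 - of_int m2 * of_int m3 = k * k * (x1*x4 - x2*x3)"
    unfolding k by (simp add: algebra_simps)
  then have "k * k = 1" using dx dM' by (simp add: m)
  then have k1: "k = 1 \<or> k = -1" by (simp add: square_eq_1_iff)
  have "int N dvd m2" "int N dvd m3" using M' by (auto simp: GammaN_def mid_def m)
  then have "of_int m2 / real N \<in> \<int>" "of_int m3 / real N \<in> \<int>"
    using of_int_divide_in_Ints[of "int N"] by (metis of_int_of_nat_eq)+
  then show ?thesis using k1 k(2,3) by (auto simp: minus_divide_left[symmetric])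
qed

text \<open>Conjugating the elements \<open>(1,N;0,1)\<close>, \<open>(1,0;N,1)\<close> and \<open>(1+N,-N;N,1-N)\<close> of \<open>\<Gamma>(N)\<close>
  by \<open>B\<close> yields off-diagonal entries \<open>\<plusminus>N\<close> times \<open>a\<^sup>2, p\<^sup>2, b\<^sup>2, (a+b)\<^sup>2, (a-p)\<^sup>2\<close>.\<close>
lemma conj_stable_GammaN_integral:
  assumes c: "\<forall>u\<in>uhp. c u = rmob (a, b, p, -a) (cnj u)" and rel: "a*a + b*p = 1"
    and stable: "conj_stable c (GammaN N)" and N: "N \<ge> 1"
  shows "a \<in> \<int> \<and> b \<in> \<int> \<and> p \<in> \<int>"
proof -
  define B where "B = (a, b, p, -a)"
  define conj where "conj M = rmul B (rmul (real_mat M) B)" for M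
  have detB: "rdet B = -1" using rel by (simp add: B_def)
  have off: "X \<in> \<int> \<and> Y \<in> \<int>"
    if "M \<in> GammaN N" "fst (snd (conj M)) = real N * X" "fst (snd (snd (conj M))) = real N * Y"
    for M X Y
  proof -
    have "conj M = (fst (conj M), real N * X, real N * Y, snd (snd (snd (conj M))))"
      using that(2,3) by (metis prod.collapse)
    from conj_stable_GammaN_off_diagonal[OF c[folded B_def] detB stable that(1) this[unfolded conj_def]]
    show ?thesis using N by simp
  qed
  have mem: "(1, int N, 0, 1) \<in> GammaN N" "(1, 0, int N, 1) \<in> GammaN N"
    "(1 + int N, - int N, int N, 1 - int N) \<in> GammaN N"
    by (simp_all add: GammaN_def SL2Z_def mid_def algebra_simps)
  have entries: "fst (snd (conj (1, int N, 0, 1))) = real N * (-(a^2))"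
    "fst (snd (snd (conj (1, int N, 0, 1)))) = real N * p^2"
    "fst (snd (conj (1, 0, int N, 1))) = real N * b^2"
    "fst (snd (snd (conj (1, 0, int N, 1)))) = real N * (-(a^2))"
    "fst (snd (conj (1 + int N, - int N, int N, 1 - int N))) = real N * (a+b)^2"
    "fst (snd (snd (conj (1 + int N, - int N, int N, 1 - int N)))) = real N * (-((a-p)^2))"
    by (simp_all add: conj_def B_def power2_eq_square algebra_simps)
  have sq: "a^2 \<in> \<int>" "p^2 \<in> \<int>" "b^2 \<in> \<int>" "(a+b)^2 \<in> \<int>" "(a-p)^2 \<in> \<int>"
    using off[OF mem(1) entries(1,2)] off[OF mem(2) entries(3,4)] off[OF mem(3) entries(5,6)] by simp_all
  have "a^2 + b*p = 1" using rel by (simp add: power2_eq_square)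
  from Ints_of_squares_Ints[OF sq(1,3,2,4,5) this] show ?thesis by blast
qed

section \<open>The conjugation on the boundary\<close>

text \<open>The anti-Moebius map \<open>z \<mapsto> (a cnj z + b) / (p cnj z - a)\<close> read on the closed disc via the
  Cayley transform.\<close>
definition disc_conj :: "real \<Rightarrow> real \<Rightarrow> real \<Rightarrow> complex \<Rightarrow> complex" where
  "disc_conj a b p w = ((-2*\<i>* of_real a - of_real (b + p)) * cnj w + of_real (b - p)) /
     (of_real (p - b) * cnj w + (of_real (b + p) - 2*\<i>* of_real a))"

lemma traceless_denom_nonzero:
  fixes a b p :: real
  assumes det: "a*a + b*p = 1" and z: "Im z \<ge> 0"
  shows "(of_real a * cnj z + of_real b) + \<i> * (of_real p * cnj z - of_real a) \<noteq> 0"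
proof
  assume "(of_real a * cnj z + of_real b) + \<i> * (of_real p * cnj z - of_real a) = 0"
  then have r: "a * Re z + b + p * Im z = 0" and i: "p * Re z - a * Im z - a = 0"
    by (simp_all add: complex_eq_iff algebra_simps)
  have "a * (p * Re z - a * Im z - a) - p * (a * Re z + b + p * Im z) = 0" using r i by simp
  then have "(a*a + p*p) * Im z = -(a*a + b*p)" by (simp add: algebra_simps)
  moreover have "(a*a + p*p) * Im z \<ge> 0" using z by simp
  ultimately show False using det by simp
qed

lemma divide_divide_moebius:
  fixes A B C D s t :: "'a::field"
  assumes "t \<noteq> 0"
  shows "(A * (s / t) + B) / (C * (s / t) + D) = (A * s + B * t) / (C * s + D * t)"
proof -
  have "A * (s / t) + B = (A * s + B * t) / t" "C * (s / t) + D = (C * s + D * t) / t"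
    using assms by (simp_all add: field_simps)
  then show ?thesis using assms by simp
qed

lemma disc_conj_cayley:
  fixes a b p :: real
  assumes det: "a*a + b*p = 1" and z: "Im z \<ge> 0"
  shows "disc_conj a b p (cayley z) =
    ((of_real a * cnj z + of_real b) - \<i> * (of_real p * cnj z - of_real a)) /
    ((of_real a * cnj z + of_real b) + \<i> * (of_real p * cnj z - of_real a))"
proof -
  define v where "v = cnj z"
  have v: "v - \<i> \<noteq> 0" using z by (auto simp: v_def complex_eq_iff)
  define X where "X = of_real a * v + of_real b"
  define Y where "Y = of_real p * v - of_real a"
  have nz: "X + \<i> * Y \<noteq> 0" using traceless_denom_nonzero[OF det z] by (simp add: X_def Y_def v_def)
  have num: "(-2*\<i>* of_real a - of_real (b + p)) * (v + \<i>) + of_real (b - p) * (v - \<i>) = -2*\<i>*(X - \<i>*Y)"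
    and den: "of_real (p - b) * (v + \<i>) + (of_real (b + p) - 2*\<i>* of_real a) * (v - \<i>) = -2*\<i>*(X + \<i>*Y)"
    unfolding X_def Y_def of_real_add of_real_diff using i_squared by algebra+
  have "disc_conj a b p (cayley z) =
     ((-2*\<i>* of_real a - of_real (b + p)) * (v + \<i>) + of_real (b - p) * (v - \<i>)) /
     (of_real (p - b) * (v + \<i>) + (of_real (b + p) - 2*\<i>* of_real a) * (v - \<i>))"
    unfolding disc_conj_def cnj_cayley v_def[symmetric] using divide_divide_moebius[OF v] by simp
  also have "\<dots> = (X - \<i>*Y) / (X + \<i>*Y)" unfolding num den using nz by simp
  finally show ?thesis by (simp add: X_def Y_def v_def)
qed

lemma disc_conj_continuous:
  fixes a b p :: real
  assumes det: "a*a + b*p = 1" and w: "cmod w \<le> 1"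
  shows "isCont (disc_conj a b p) w"
proof -
  define C where "C = of_real (b + p) - 2*\<i>* of_real a"
  have "cmod (of_real (p - b) * cnj w) = \<bar>p - b\<bar> * cmod w"
    by (simp only: norm_mult norm_of_real complex_mod_cnj)
  then have "cmod (of_real (p - b) * cnj w) \<le> \<bar>p - b\<bar>"
    using w by (simp add: mult_left_le)
  moreover have C: "(cmod C)^2 = \<bar>p - b\<bar>^2 + 4*(a*a + b*p)"
    unfolding C_def cmod_power2 by (simp add: power2_eq_square algebra_simps)
  moreover have "\<bar>p - b\<bar> < cmod C"
  proof (rule power2_less_imp_less)
    show "\<bar>p - b\<bar>^2 < (cmod C)^2" using C det by simp
  qed simp
  ultimately have less: "cmod (of_real (p - b) * cnj w) < cmod C" by linarith
  have "of_real (p - b) * cnj w + C \<noteq> 0"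
  proof
    assume "of_real (p - b) * cnj w + C = 0"
    then have "C = - (of_real (p - b) * cnj w)" by (simp add: eq_neg_iff_add_eq_0 add.commute)
    with less show False by simp
  qed
  then show ?thesis unfolding disc_conj_def C_def[symmetric] by (intro continuous_intros) auto
qed

text \<open>The point of \<open>h \<union> \<bbbP>\<^sup>1(\<real>)\<close> with homogeneous coordinates \<open>(u : v)\<close>.\<close>
definition proj_point :: "complex \<Rightarrow> complex \<Rightarrow> complex option" where
  "proj_point u v = (if v = 0 then None else Some (u / v))"

lemma proj_point_eq_iff:
  assumes "u \<noteq> 0 \<or> v \<noteq> 0" "u' \<noteq> 0 \<or> v' \<noteq> 0"
  shows "proj_point u v = proj_point u' v' \<longleftrightarrow> u * v' = u' * v"
  using assms by (auto simp: proj_point_def field_simps)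

lemma mobx_Some: "mobx (a,b,c,d) (Some z) = proj_point (of_int a * z + of_int b) (of_int c * z + of_int d)"
  by (simp add: proj_point_def)

lemma mobx_None: "mobx (a,b,c,d) None = proj_point (of_int a) (of_int c)"
  by (simp add: proj_point_def)

lemma icay_proj_point:
  fixes X Y :: real
  assumes "X \<noteq> 0 \<or> Y \<noteq> 0"
  shows "icay ((of_real X - \<i> * of_real Y) / (of_real X + \<i> * of_real Y)) = proj_point (of_real X) (of_real Y)"
proof (cases "Y = 0")
  case True
  then show ?thesis using assms by (simp add: icay_def proj_point_def)
next
  case False
  define w where "w = (of_real X - \<i> * of_real Y) / (of_real X + \<i> * of_real Y)"
  have nz: "complex_of_real X + \<i> * of_real Y \<noteq> 0" using assms by (auto simp: complex_eq_iff)
  have "w \<noteq> 1"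
  proof
    assume "w = 1"
    then have "of_real X - \<i> * of_real Y = of_real X + \<i> * (of_real Y :: complex)"
      using nz by (simp add: w_def field_simps)
    then show False using False by (simp add: complex_eq_iff)
  qed
  moreover have a: "1 + w = 2 * of_real X / (of_real X + \<i> * of_real Y)"
    "1 - w = 2 * \<i> * of_real Y / (of_real X + \<i> * of_real Y)"
    using nz by (simp_all add: w_def field_simps)
  have "\<i> * (1 + w) / (1 - w) = of_real X / of_real Y"
    unfolding a using nz False by (simp add: field_simps)
  ultimately show ?thesis using False by (simp add: icay_def proj_point_def w_def[symmetric])
qed

context
  fixes c :: "complex \<Rightarrow> complex" and a b p :: real
  assumes c: "\<forall>u\<in>uhp. c u = rmob (a,b,p,-a) (cnj u)" and det: "a*a + b*p = 1"
begin

lemma cay_conj_eq_disc_conj: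
  assumes w: "w \<in> ball 0 1"
  shows "cay (Some (c (the (icay w)))) = disc_conj a b p w"
proof -
  have "w \<noteq> 1" using w by auto
  then have icw: "icay w = Some (cayley_inv w)" and Ku: "cayley (cayley_inv w) = w"
    by (simp add: icay_def cayley_inv_def, rule cayley_cayley_inv)
  define u where "u = cayley_inv w"
  have u: "u \<in> uhp" using cayley_inv_in_uhp[OF w] by (simp add: u_def)
  define X where "X = of_real a * cnj u + of_real b"
  define Y where "Y = of_real p * cnj u - of_real a"
  have "Y \<noteq> 0"
    using rmob_denom_nonzero[of "cnj u" a "-a" b p] det u by (simp add: Y_def uhp_def algebra_simps)
  moreover have "c u = X / Y" using c u by (simp add: X_def Y_def)
  ultimately have "cay (Some (c (the (icay w)))) = (X - \<i> * Y) / (X + \<i> * Y)"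
    by (simp add: icw cay_Some cayley_def flip: u_def) (simp add: divide_simps)
  also have "\<dots> = disc_conj a b p w"
    using disc_conj_cayley[OF det, of u] u Ku by (simp add: uhp_def X_def Y_def u_def)
  finally show ?thesis .
qed

lemma Lim_cay_conj:
  assumes \<zeta>: "cmod \<zeta> = 1"
  shows "Lim (at \<zeta> within ball 0 1) (\<lambda>w. cay (Some (c (the (icay w))))) = disc_conj a b p \<zeta>"
proof (rule tendsto_Lim)
  show "\<not> trivial_limit (at \<zeta> within ball 0 1)"
    using \<zeta> by (simp add: trivial_limit_within islimpt_ball)
  have "(disc_conj a b p \<longlongrightarrow> disc_conj a b p \<zeta>) (at \<zeta> within ball 0 1)"
    using disc_conj_continuous[OF det, of \<zeta>] \<zeta> continuous_at_imp_continuous_within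
    unfolding continuous_within by fastforce
  then show "((\<lambda>w. cay (Some (c (the (icay w))))) \<longlongrightarrow> disc_conj a b p \<zeta>) (at \<zeta> within ball 0 1)"
    by (rule Lim_transform_eventually)
       (auto simp: eventually_at_filter cay_conj_eq_disc_conj intro!: always_eventually)
qed

lemma cext_real:
  "cext c (Some (of_real r)) = proj_point (of_real (a*r + b)) (of_real (p*r - a))"
proof -
  have nz: "a*r + b \<noteq> 0 \<or> p*r - a \<noteq> 0"
  proof (rule ccontr)
    assume "\<not> ?thesis"
    then have "p*(a*r+b) - a*(p*r - a) = 0" by simp
    with det show False by (simp add: algebra_simps)
  qed
  have "(cmod (of_real r - \<i>))^2 = (cmod (of_real r + \<i>))^2" unfolding cmod_power2 by simp
  then have "cmod (of_real r - \<i>) = cmod (of_real r + \<i>)" by (metis norm_ge_zero power2_eq_iff_nonneg)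
  then have "cmod (cay (Some (of_real r))) = 1" by (simp add: cay_def norm_divide add_i_nonzero)
  then have "cext c (Some (of_real r)) = icay (disc_conj a b p (cay (Some (of_real r))))"
    using Lim_cay_conj by (simp add: cext_def uhp_def)
  also have "disc_conj a b p (cay (Some (of_real r))) =
     (of_real (a*r+b) - \<i> * of_real (p*r - a)) / (of_real (a*r+b) + \<i> * of_real (p*r - a))"
    unfolding cay_Some using disc_conj_cayley[OF det, of "of_real r"] by simp
  also have "icay \<dots> = proj_point (of_real (a*r + b)) (of_real (p*r - a))"
    using nz by (rule icay_proj_point)
  finally show ?thesis .
qed

lemma cext_None: "cext c None = proj_point (of_real a) (of_real p)"
proof -
  have nz: "a \<noteq> 0 \<or> p \<noteq> 0" using det by auto
  then have "complex_of_real p - \<i> * of_real a \<noteq> 0" "complex_of_real a + \<i> * of_real p \<noteq> 0"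
    by (auto simp: complex_eq_iff)
  then have "disc_conj a b p 1 = (of_real a - \<i> * of_real p) / (of_real a + \<i> * of_real p)"
    by (simp add: disc_conj_def field_simps)
  then show ?thesis using Lim_cay_conj[of 1] icay_proj_point[OF nz] by (simp add: cext_def cay_def)
qed

lemma cext_Some_hstar:
  assumes "Some z \<in> hstar"
  shows "cext c (Some z) = proj_point (of_real a * cnj z + of_real b) (of_real p * cnj z - of_real a)"
proof (cases "z \<in> uhp")
  case True
  then have "of_real p * cnj z - of_real a \<noteq> 0"
    using rmob_denom_nonzero[of "cnj z" a "-a" b p] det by (simp add: uhp_def algebra_simps)
  then show ?thesis using True c by (simp add: cext_def proj_point_def)
next
  case False
  then obtain r :: real where "z = of_real r" using assms by (auto simp: hstar_def cusps_def)
  then show ?thesis using cext_real[of r] by simp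
qed

end

section \<open>Geodesics with rational endpoints\<close>

text \<open>The hyperbolic geodesic \<open>g |z|\<^sup>2 - 2 e Re z - f = 0\<close> in \<open>h\<^sup>*\<close>: a half-circle, or a vertical
  line through \<open>\<infinity>\<close> when \<open>g = 0\<close>.\<close>
definition geodesic :: "int \<Rightarrow> int \<Rightarrow> int \<Rightarrow> complex option set" where
  "geodesic e f g = {x \<in> hstar. case x of None \<Rightarrow> g = 0
     | Some z \<Rightarrow> of_int g * (cmod z)^2 - 2 * of_int e * Re z - of_int f = 0}"

lemma rat_in_cusps: "x \<in> \<rat> \<Longrightarrow> Some (complex_of_real x) \<in> cusps"
  by (auto simp: cusps_def elim: Rats_cases)

lemma hstar_Im_nonneg: "Some z \<in> hstar \<Longrightarrow> Im z \<ge> 0"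
  by (auto simp: hstar_def cusps_def uhp_def)

lemma inj_on_cay_hstar: "inj_on cay hstar"
proof
  fix x y assume x: "x \<in> hstar" and y: "y \<in> hstar" and eq: "cay x = cay y"
  have cayley_ne_1: "cayley z \<noteq> 1" if "Some z \<in> hstar" for z
    using add_i_nonzero[OF hstar_Im_nonneg[OF that]] by (auto simp: cayley_def)
  show "x = y"
  proof (cases x; cases y)
    fix z w assume "x = Some z" "y = Some w"
    then show "x = y" using eq x y cayley_inj add_i_nonzero hstar_Im_nonneg by (simp add: cay_Some)
  qed (use eq x y cayley_ne_1 in \<open>auto simp: cay_Some cay_def[of None]\<close>)
qed

lemma homeomorphic_interval_cay_image:
  fixes Q :: "real \<Rightarrow> complex option"
  assumes "continuous_on {0..1} (cay \<circ> Q)" "inj_on Q {0..1}" "Q ` {0..1} \<subseteq> hstar"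
  shows "cay ` Q ` {0..1} homeomorphic {0..1::real}"
proof -
  have "inj_on (cay \<circ> Q) {0..1}"
    using assms(2,3) inj_on_cay_hstar by (simp add: comp_inj_on inj_on_subset)
  then have "{0..1::real} homeomorphic (cay \<circ> Q) ` {0..1}"
    by (rule homeomorphic_compact[OF compact_Icc assms(1) refl])
  then show ?thesis by (simp add: image_comp homeomorphic_sym[of "{0..1::real}"])
qed

lemma circle_equation_iff:
  fixes e f g x y :: real
  assumes g: "g \<noteq> 0" and ef: "e*e + f*g = 1"
  shows "g*(x^2+y^2) - 2*e*x - f = 0 \<longleftrightarrow> (x - e/g)^2 + y^2 = (1/\<bar>g\<bar>)^2"
proof -
  have "(x - e/g)^2 + y^2 - (1/\<bar>g\<bar>)^2 = (g*(x^2+y^2) - 2*e*x - f) / g"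
    using g ef by (simp add: field_simps power2_eq_square power_divide) algebra
  then show ?thesis using g by (metis divide_eq_0_iff eq_iff_diff_eq_0)
qed

lemma geodesic_circle:
  assumes g: "g \<noteq> 0" and ef: "e*e + f*g = 1"
  defines "A \<equiv> \<lambda>t. Some (of_real (e/g) + of_real (1/\<bar>g\<bar>) * cis (pi * t))"
  shows "geodesic e f g = A ` {0..1}"
proof -
  define m \<rho> where "m = real_of_int e / of_int g" and "\<rho> = 1 / \<bar>real_of_int g\<bar>"
  have \<rho>: "\<rho> > 0" using g by (simp add: \<rho>_def)
  have on_circle: "Some z \<in> geodesic e f g \<longleftrightarrow> Some z \<in> hstar \<and> cmod (z - of_real m) = \<rho>" for z
  proof -
    have "of_int g * (cmod z)^2 - 2 * of_int e * Re z - of_int f = 0 \<longleftrightarrow> (cmod (z - of_real m))^2 = \<rho>^2"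
      using circle_equation_iff[of g e f "Re z" "Im z"] g ef
      by (simp add: cmod_power2 m_def \<rho>_def) (metis of_int_add of_int_mult of_int_1)
    then show ?thesis using \<rho> by (simp add: geodesic_def power2_eq_iff_nonneg)
  qed
  have m\<rho>: "m + \<rho> \<in> \<rat>" "m - \<rho> \<in> \<rat>" by (simp_all add: m_def \<rho>_def)
  show ?thesis
  proof (intro equalityI subsetI)
    fix x assume x: "x \<in> geodesic e f g"
    then obtain z where z: "x = Some z" using g by (cases x) (auto simp: geodesic_def)
    define w where "w = (z - of_real m) / of_real \<rho>"
    have "cmod w = 1" "Im w \<ge> 0"
      using x on_circle \<rho> hstar_Im_nonneg by (auto simp: z w_def norm_divide)
    moreover from this have "w \<noteq> 0" by auto
    ultimately have "cis (Arg w) = w" "0 \<le> Arg w" "Arg w \<le> pi"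
      using cis_Arg[of w] Arg_less_0[of w] Arg_bounded[of w] by (auto simp: sgn_div_norm)
    then have "x = A (Arg w / pi)" "Arg w / pi \<in> {0..1}"
      using \<rho> by (auto simp: A_def z w_def m_def \<rho>_def)
    then show "x \<in> A ` {0..1}" by blast
  next
    fix x assume "x \<in> A ` {0..1}"
    then obtain t where t: "t \<in> {0..1}" "x = Some (of_real m + of_real \<rho> * cis (pi * t))"
      by (auto simp: A_def m_def \<rho>_def)
    consider "t = 0" | "t = 1" | "0 < t \<and> t < 1" using t by fastforce
    then have "x \<in> hstar"
    proof cases
      case 3
      then have "sin (pi * t) > 0" by (intro sin_gt_zero) auto
      then show ?thesis using t \<rho> by (simp add: hstar_def uhp_def)
    qed (use t rat_in_cusps[OF m\<rho>(1)] rat_in_cusps[OF m\<rho>(2)] in \<open>auto simp: hstar_def\<close>)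
    then show "x \<in> geodesic e f g" using t on_circle \<rho> by (simp add: norm_mult)
  qed
qed

definition arc_between_cusps :: "complex option set \<Rightarrow> (real \<Rightarrow> complex option) \<Rightarrow> bool" where
  "arc_between_cusps S Q \<longleftrightarrow> S = Q ` {0..1} \<and> inj_on Q {0..1} \<and>
     continuous_on {0..1} (cay \<circ> Q) \<and> Q 0 \<in> cusps \<and> Q 1 \<in> cusps"

lemma arc_between_cusps_homeomorphic:
  assumes "arc_between_cusps S Q" "S \<subseteq> hstar"
  shows "(\<exists>x y. x \<in> S \<and> y \<in> S \<and> x \<in> cusps \<and> y \<in> cusps \<and> x \<noteq> y)
    \<and> (cay ` S) homeomorphic {0..1::real}"
proof -
  have Q: "S = Q ` {0..1}" "inj_on Q {0..1}" "continuous_on {0..1} (cay \<circ> Q)"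
    "Q 0 \<in> cusps" "Q 1 \<in> cusps"
    using assms(1) by (auto simp: arc_between_cusps_def)
  have "Q 0 \<in> S" "Q 1 \<in> S" "Q 0 \<noteq> Q 1" using Q(1) inj_onD[OF Q(2), of 0 1] by auto
  moreover have "cay ` S homeomorphic {0..1::real}"
    using homeomorphic_interval_cay_image[OF Q(3,2)] Q(1) assms(2) by simp
  ultimately show ?thesis using Q(4,5) by blast
qed

lemma geodesic_circle_arc:
  assumes g: "g \<noteq> 0" and ef: "e*e + f*g = 1"
  shows "\<exists>Q. arc_between_cusps (geodesic e f g) Q"
proof -
  define m \<rho> where "m = real_of_int e / of_int g" and "\<rho> = 1 / \<bar>real_of_int g\<bar>"
  define Z where "Z t = of_real m + of_real \<rho> * cis (pi * t)" for t
  have \<rho>: "\<rho> > 0" using g by (simp add: \<rho>_def)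
  have Im_Z: "Im (Z t) \<ge> 0" if "t \<in> {0..1}" for t
    using \<rho> that by (simp add: Z_def sin_ge_zero)
  have "inj_on Z {0..1}"
  proof
    fix s t assume s: "s \<in> {0..1}" and t: "t \<in> {0..1}" and "Z s = Z t"
    then have "cos (pi * s) = cos (pi * t)" using \<rho> by (simp add: Z_def complex_eq_iff)
    from cos_inj_pi[OF _ _ _ _ this] s t have "pi * s = pi * t" by auto
    then show "s = t" by simp
  qed
  moreover have "continuous_on {0..1} (cay \<circ> (Some \<circ> Z))"
    using Im_Z add_i_nonzero unfolding o_def cay_Some cayley_def Z_def
    by (intro continuous_intros) auto
  moreover have "(Some \<circ> Z) 0 \<in> cusps" "(Some \<circ> Z) 1 \<in> cusps"
    using rat_in_cusps[of "m + \<rho>"] rat_in_cusps[of "m - \<rho>"] by (simp_all add: Z_def m_def \<rho>_def)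
  moreover have "geodesic e f g = (Some \<circ> Z) ` {0..1}"
    using geodesic_circle[OF g ef] by (simp add: Z_def m_def \<rho>_def o_def)
  ultimately have "arc_between_cusps (geodesic e f g) (Some \<circ> Z)"
    unfolding arc_between_cusps_def by (simp add: comp_inj_on del: comp_apply)
  then show ?thesis by blast
qed

lemma geodesic_line:
  fixes e f :: int
  assumes e: "e*e = 1"
  defines "L \<equiv> \<lambda>t. if t = 1 then None else Some (of_real (- f / (2*e)) + \<i> * of_real (t / (1 - t)))"
  shows "geodesic e f 0 = L ` {0..1}"
proof -
  define x0 where "x0 = - real_of_int f / (2 * of_int e)"
  have e0: "real_of_int e \<noteq> 0" using e by auto
  have on_line: "Some z \<in> geodesic e f 0 \<longleftrightarrow> Some z \<in> hstar \<and> Re z = x0" for z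
    using e0 by (auto simp: geodesic_def x0_def field_simps)
  show ?thesis
  proof (intro equalityI subsetI)
    fix x assume x: "x \<in> geodesic e f 0"
    show "x \<in> L ` {0..1}"
    proof (cases x)
      case None
      then show ?thesis by (auto simp: L_def intro!: image_eqI[of _ _ 1])
    next
      case (Some z)
      define t where "t = Im z / (1 + Im z)"
      have "Im z \<ge> 0" "Re z = x0" using x on_line hstar_Im_nonneg by (auto simp: Some)
      then have "t \<in> {0..1}" "t \<noteq> 1" "t / (1 - t) = Im z" by (auto simp: t_def field_simps)
      then have "x = L t" using \<open>Re z = x0\<close> by (simp add: L_def Some x0_def complex_eq_iff)
      then show ?thesis using \<open>t \<in> {0..1}\<close> by blast
    qed
  next
    fix x assume "x \<in> L ` {0..1}"
    then obtain t where t: "t \<in> {0..1}" "x = L t" by blast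
    consider "t = 1" | "t = 0" | "0 < t \<and> t < 1" using t by fastforce
    then show "x \<in> geodesic e f 0"
    proof cases
      case 1 then show ?thesis using t by (simp add: L_def geodesic_def hstar_def cusps_def)
    next
      case 2
      have "x = Some (of_real x0)" using 2 t by (simp add: L_def x0_def)
      moreover have "Some (of_real x0) \<in> hstar"
        using rat_in_cusps[of x0] by (simp add: x0_def hstar_def)
      ultimately show ?thesis using on_line by simp
    next
      case 3
      then have "t / (1 - t) > 0" by simp
      then show ?thesis using 3 t on_line by (simp add: L_def hstar_def uhp_def x0_def)
    qed
  qed
qed

lemma geodesic_line_arc:
  fixes e f :: int
  assumes e: "e*e = 1"
  shows "\<exists>Q. arc_between_cusps (geodesic e f 0) Q"
proof -
  define x0 where "x0 = - real_of_int f / (2 * of_int e)"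
  define L where "L t = (if t = 1 then None else Some (of_real x0 + \<i> * of_real (t / (1 - t))))"
    for t :: real
  have "inj_on L {0..1}"
  proof
    fix s t assume "s \<in> {0..1}" "t \<in> {0..1}" "L s = L t"
    then have "s = 1 \<and> t = 1 \<or> s \<noteq> 1 \<and> t \<noteq> 1 \<and> s / (1 - s) = t / (1 - t)"
      by (auto simp: L_def split: if_splits simp del: of_real_divide)
    then show "s = t" by (auto simp: field_simps)
  qed
  moreover have "continuous_on {0..1} (cay \<circ> L)"
  proof -
    \<comment> \<open>on the line, \<open>cay\<close> becomes a rational function of \<open>t\<close>, also at \<open>t = 1 \<mapsto> \<infinity>\<close>\<close>
    have den: "of_real (x0 * (1 - t)) + \<i> \<noteq> 0" for t by (simp add: complex_eq_iff)
    have formula: "(cay \<circ> L) t = (of_real (x0 * (1 - t)) + \<i> * of_real (2*t - 1)) / (of_real (x0 * (1 - t)) + \<i>)"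
      for t
    proof (cases "t = 1")
      case False
      then have "1 - complex_of_real t \<noteq> 0" by (metis eq_iff_diff_eq_0 of_real_1 of_real_eq_iff)
      then show ?thesis using False den[of t]
        by (simp add: L_def cay_Some cayley_def divide_simps) (simp add: algebra_simps)
    qed (simp add: L_def cay_def)
    have "continuous_on {0..1}
        (\<lambda>t. (of_real (x0 * (1 - t)) + \<i> * of_real (2*t - 1)) / (of_real (x0 * (1 - t)) + \<i>))"
      using den by (intro continuous_intros) auto
    then show ?thesis using formula by (simp only: comp_def)
  qed
  moreover have "L 0 \<in> cusps" "L 1 \<in> cusps"
    using rat_in_cusps[of x0] by (simp_all add: L_def x0_def cusps_def)
  moreover have "geodesic e f 0 = L ` {0..1}"
    using geodesic_line[OF e, of f] by (simp add: L_def[abs_def] x0_def)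
  ultimately have "arc_between_cusps (geodesic e f 0) L" unfolding arc_between_cusps_def by blast
  then show ?thesis by blast
qed

lemma geodesic_arc:
  assumes "e*e + f*g = 1"
  shows "\<exists>Q. arc_between_cusps (geodesic e f g) Q"
  using assms geodesic_circle_arc geodesic_line_arc by (cases "g = 0") auto

section \<open>The fixed-point set of an admissible element\<close>

lemma real_congruence_group_conj_matrix:
  assumes "real_congruence_group G c"
  shows "\<exists>a b p :: int. a*a + b*p = 1 \<and> (\<forall>u\<in>uhp. c u = mob (a, b, p, -a) (cnj u))"
proof -
  have cc: "complex_conjugation c" and stable: "\<exists>N\<ge>1. conj_stable c (GammaN N)"
    using assms by (auto simp: real_congruence_group_def)
  obtain B where B: "rdet B = -1" and c: "\<forall>u\<in>uhp. c u = rmob B (cnj u)"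
    using complex_conjugation_anti_moebius[OF cc] by blast
  have "\<forall>z\<in>uhp. rmob B (cnj (rmob B (cnj z))) = z"
  proof
    fix z assume z: "z \<in> uhp"
    then have "c z \<in> uhp" "c (c z) = z" using cc by (auto simp: complex_conjugation_def)
    then show "rmob B (cnj (rmob B (cnj z))) = z" using c z by simp
  qed
  with B have "\<exists>a b p. B = (a, b, p, -a)" by (intro anti_moebius_involution_traceless) simp_all
  then obtain a b p where Bt: "B = (a, b, p, -a)" by blast
  then have rel: "a*a + b*p = 1" using B by simp
  obtain N where N: "N \<ge> 1" "conj_stable c (GammaN N)" using stable by blast
  have "a \<in> \<int> \<and> b \<in> \<int> \<and> p \<in> \<int>"
    using conj_stable_GammaN_integral[OF _ rel N(2,1)] c unfolding Bt by blast
  then obtain a' b' p' where abp: "a = of_int a'" "b = of_int b'" "p = of_int p'" by (meson Ints_cases)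
  then have "real_of_int (a'*a' + b'*p') = 1" using rel by simp
  then have "a'*a' + b'*p' = 1" by (simp only: of_int_eq_1_iff)
  moreover have "\<forall>u\<in>uhp. c u = mob (a', b', p', -a') (cnj u)" using c by (simp add: Bt abp)
  ultimately show ?thesis by blast
qed

lemma mob_minv:
  assumes M: "mdet M = 1" and z: "z \<in> uhp"
  shows "mob M (mob (minv M) z) = z" "mob (minv M) z \<in> uhp"
proof -
  have det: "rdet (real_mat M) = 1" "rdet (real_mat (minv M)) = 1"
    using M by (simp_all add: rdet_real_mat mdet_minv)
  have "rmul (real_mat M) (real_mat (minv M)) = (rdet (real_mat M), 0, 0, rdet (real_mat M))"
    by (cases M) (simp add: algebra_simps)
  then show "mob M (mob (minv M) z) = z"
    using rmob_rmul[of z "real_mat M" "real_mat (minv M)"] det z by (simp add: mob_eq_rmob uhp_def)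
  show "mob (minv M) z \<in> uhp"
    using Im_rmob_pos[of z "real_mat (minv M)"] det z by (simp add: mob_eq_rmob uhp_def)
qed

text \<open>Admissibility makes \<open>\<sigma> = \<gamma>\<^sup>-\<^sup>1 \<circ> c\<close> an involution: from \<open>c \<gamma> c = \<gamma>\<^sup>-\<^sup>1\<close> one gets
  \<open>c \<gamma>\<^sup>-\<^sup>1 c = \<gamma>\<close>, hence \<open>\<sigma> \<sigma> = \<gamma>\<^sup>-\<^sup>1 (c \<gamma>\<^sup>-\<^sup>1 c) = id\<close>.\<close>
lemma admissible_reflection_traceless:
  assumes cc: "complex_conjugation c" and c: "\<forall>u\<in>uhp. c u = mob B (cnj u)" and B: "mdet B = -1"
    and \<gamma>: "mdet \<gamma> = 1" and adm: "\<forall>z\<in>uhp. c (mob \<gamma> (c z)) = mob (minv \<gamma>) z"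
  shows "\<exists>e f g. mmul (minv \<gamma>) B = (e, f, g, -e)"
proof -
  have cu: "\<And>z. z \<in> uhp \<Longrightarrow> c z \<in> uhp" and cinv: "\<And>z. z \<in> uhp \<Longrightarrow> c (c z) = z"
    using cc by (auto simp: complex_conjugation_def)
  define A where "A = real_mat (mmul (minv \<gamma>) B)"
  have dA: "rdet A = -1" using B \<gamma> by (simp add: A_def rdet_real_mat mdet_mmul mdet_minv)
  have "rdet (real_mat (minv \<gamma>)) \<noteq> 0" "rdet (real_mat B) \<noteq> 0"
    using B \<gamma> by (simp_all add: rdet_real_mat mdet_minv)
  then have \<sigma>: "mob (minv \<gamma>) (c z) = rmob A (cnj z)" if "z \<in> uhp" for z
    using rmob_rmul[of "cnj z" "real_mat (minv \<gamma>)" "real_mat B"] c that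
    by (simp add: A_def mob_eq_rmob real_mat_mmul uhp_def)
  have invol: "mob (minv \<gamma>) (c (mob (minv \<gamma>) (c z))) = z" if z: "z \<in> uhp" for z
  proof -
    define w where "w = c (mob (minv \<gamma>) (c z))"
    have "mob (minv \<gamma>) (c z) \<in> uhp" using mob_minv(2)[OF \<gamma> cu[OF z]] .
    then have w: "w \<in> uhp" "mob \<gamma> (c w) = c z"
      using cu cinv mob_minv(1)[OF \<gamma> cu[OF z]] by (simp_all add: w_def)
    then have "mob (minv \<gamma>) w = c (c z)" using adm by metis
    then show ?thesis using cinv z by (simp add: w_def)
  qed
  have "\<forall>z\<in>uhp. rmob A (cnj (rmob A (cnj z))) = z"
  proof
    fix z assume z: "z \<in> uhp"
    then have "rmob A (cnj z) \<in> uhp" using \<sigma> mob_minv(2)[OF \<gamma> cu[OF z]] by simp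
    then show "rmob A (cnj (rmob A (cnj z))) = z" using invol[OF z] \<sigma> z by simp
  qed
  with dA have "\<exists>e f g. A = (e, f, g, -e)" by (intro anti_moebius_involution_traceless) simp_all
  then obtain e f g where "A = (e, f, g, -e)" by blast
  then show ?thesis unfolding A_def by (cases "mmul (minv \<gamma>) B") auto
qed

lemma moebius_pair_nonzero:
  fixes a b c d z :: "'a::field"
  assumes "a*d - b*c \<noteq> 0"
  shows "a*z + b \<noteq> 0 \<or> c*z + d \<noteq> 0"
proof -
  have "a*(c*z + d) - c*(a*z + b) = a*d - b*c" by (simp add: algebra_simps)
  then show ?thesis using assms by auto
qed

lemma mmul_minv_cross_identity:
  fixes z w :: "'a::comm_ring_1"
  assumes "mmul (minv (g1, g2, g3, g4)) (a, b, p, -a) = (e, f, g, h)"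
  shows "(of_int g1 * z + of_int g2) * (of_int p * w - of_int a) - (of_int a * w + of_int b) * (of_int g3 * z + of_int g4)
    = of_int g * z * w + of_int h * z - of_int e * w - of_int f"
proof -
  from assms have eqs: "e = g4*a - g2*p" "f = g4*b + g2*a" "g = g1*p - g3*a" "h = - g3*b - g1*a"
    by auto
  show ?thesis unfolding eqs by (simp add: algebra_simps)
qed

lemma Cgamma_eq_geodesic:
  assumes c: "\<forall>u\<in>uhp. c u = mob (a, b, p, -a) (cnj u)" and rel: "a*a + b*p = 1"
    and \<gamma>: "mdet \<gamma> = 1" and A: "mmul (minv \<gamma>) (a, b, p, -a) = (e, f, g, -e)"
  shows "Cgamma c \<gamma> = geodesic e f g"
proof -
  obtain g1 g2 g3 g4 where \<gamma>4: "\<gamma> = (g1, g2, g3, g4)" by (cases \<gamma>)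
  have cR: "\<forall>u\<in>uhp. c u = rmob (of_int a, of_int b, of_int p, - of_int a) (cnj u)"
    using c by (simp add: mob_eq_rmob)
  have relR: "of_int a * of_int a + of_int b * of_int p = (1::real)"
    using rel by (metis of_int_1 of_int_add of_int_mult)
  have nz\<gamma>: "of_int g1 * z + of_int g2 \<noteq> 0 \<or> of_int g3 * z + of_int g4 \<noteq> (0::complex)" for z
    using \<gamma> by (intro moebius_pair_nonzero) (simp add: \<gamma>4 flip: of_int_mult of_int_diff)
  have "of_int a * (- of_int a) - of_int b * of_int p = - (of_int (a*a + b*p) :: complex)" by simp
  then have "of_int a * z + of_int b \<noteq> 0 \<or> of_int p * z + - of_int a \<noteq> (0::complex)" for z
    using rel by (intro moebius_pair_nonzero) simp
  then have nzB: "of_int a * z + of_int b \<noteq> 0 \<or> of_int p * z - of_int a \<noteq> (0::complex)" for z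
    by simp
  have "x \<in> Cgamma c \<gamma> \<longleftrightarrow> x \<in> geodesic e f g" if x: "x \<in> hstar" for x
  proof (cases x)
    case None
    have "g1 \<noteq> 0 \<or> g3 \<noteq> 0" using \<gamma> by (auto simp: \<gamma>4)
    then have "(of_int g1 :: complex) \<noteq> 0 \<or> (of_int g3 :: complex) \<noteq> 0" by simp
    moreover have "(of_int a :: complex) \<noteq> 0 \<or> (of_int p :: complex) \<noteq> 0" using rel by auto
    ultimately have "mobx \<gamma> x = cext c x \<longleftrightarrow> of_int g1 * of_int p = of_int a * (of_int g3 :: complex)"
      using cext_None[OF cR relR] unfolding None \<gamma>4 mobx_None by (simp add: proj_point_eq_iff)
    also have "\<dots> \<longleftrightarrow> g1*p = a*g3" by (simp only: of_int_mult[symmetric] of_int_eq_iff)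
    also have "\<dots> \<longleftrightarrow> g = 0" using A by (auto simp: \<gamma>4)
    finally show ?thesis using x by (simp add: Cgamma_def geodesic_def None)
  next
    case (Some z)
    have "mobx \<gamma> x = cext c x \<longleftrightarrow>
        (of_int g1 * z + of_int g2) * (of_int p * cnj z - of_int a) = (of_int a * cnj z + of_int b) * (of_int g3 * z + of_int g4)"
    proof -
      have "mobx \<gamma> x = proj_point (of_int g1 * z + of_int g2) (of_int g3 * z + of_int g4)"
        by (simp only: Some \<gamma>4 mobx_Some)
      moreover have "cext c x = proj_point (of_int a * cnj z + of_int b) (of_int p * cnj z - of_int a)"
        using cext_Some_hstar[OF cR relR, of z] x by (simp add: Some)
      ultimately show ?thesis using proj_point_eq_iff[OF nz\<gamma>[of z] nzB[of "cnj z"]] by simp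
    qed
    also have "\<dots> \<longleftrightarrow> of_int g * z * cnj z - of_int e * z - of_int e * cnj z - of_int f = 0"
      unfolding eq_iff_diff_eq_0[of "_ * _"] mmul_minv_cross_identity[OF A[unfolded \<gamma>4]] by simp
    also have "of_int g * z * cnj z - of_int e * z - of_int e * cnj z - of_int f
        = complex_of_real (of_int g * (cmod z)^2 - 2 * of_int e * Re z - of_int f)"
      unfolding cmod_power2 by (simp add: complex_eq_iff power2_eq_square algebra_simps)
    finally have "mobx \<gamma> x = cext c x \<longleftrightarrow> of_int g * (cmod z)^2 - 2 * of_int e * Re z - of_int f = 0"
      by (simp only: of_real_eq_0_iff)
    then show ?thesis using x by (simp add: Cgamma_def geodesic_def Some)
  qed
  then show ?thesis by (auto simp: Cgamma_def geodesic_def)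
qed

theorem proposition5p3:
  assumes "real_congruence_group G c"
    and "admissible G c \<gamma>"
  shows "(\<exists>p q. p \<in> Cgamma c \<gamma> \<and> q \<in> Cgamma c \<gamma> \<and> p \<in> cusps \<and> q \<in> cusps \<and> p \<noteq> q)
         \<and> (cay ` Cgamma c \<gamma>) homeomorphic {0..1::real}"
proof -
  obtain a b p :: int where rel: "a*a + b*p = 1" and c: "\<forall>u\<in>uhp. c u = mob (a, b, p, -a) (cnj u)"
    using real_congruence_group_conj_matrix[OF assms(1)] by blast
  have cc: "complex_conjugation c" and \<gamma>: "mdet \<gamma> = 1"
    and adm: "\<forall>z\<in>uhp. c (mob \<gamma> (c z)) = mob (minv \<gamma>) z"
    using assms by (auto simp: real_congruence_group_def psl2z_subgroup_def admissible_def SL2Z_def)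
  have B: "mdet (a, b, p, -a) = -1" using rel by simp
  then obtain e f g where A: "mmul (minv \<gamma>) (a, b, p, -a) = (e, f, g, -e)"
    using admissible_reflection_traceless[OF cc c _ \<gamma> adm] by blast
  have "mdet (e, f, g, -e) = -1" using B \<gamma> by (simp flip: A add: mdet_mmul mdet_minv)
  then have "e*e + f*g = 1" by simp
  then obtain Q where "arc_between_cusps (geodesic e f g) Q" using geodesic_arc by blast
  moreover have "geodesic e f g \<subseteq> hstar" by (auto simp: geodesic_def)
  ultimately show ?thesis
    using Cgamma_eq_geodesic[OF c rel \<gamma> A] arc_between_cusps_homeomorphic by simp
qed

end
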